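(* Let $f_0,f_1\in \mathrm{PL}_0(\mathbf{I})$ satisfy $[f_1^{f_0},f_0f_1^{-1}]=1$ and $[f_0f_1^{-1},f_1^{f_0^2}]=1$. If $A$ is an orbital of $f_0$, then either there exists an orbital $B$ of $f_1$ with $B\subseteq A$, or $A$ is disjoint from $\operatorname{Supp}(f_1)$.
   Context: $\mathrm{PL}_0(\mathbf{I})$ is the group of orientation-preserving piecewise-linear homeomorphisms of $[0,1]$ with finitely many points of non-differentiability. Functions act on the right: $tf=f(t)$, $fg=g\circ f$, $a^b=b^{-1}ab$, $[a,b]=aba^{-1}b^{-1}$. The orbitals of $f$ are the connected components (open intervals) of $\operatorname{Supp}(f)=\{x: xf\ne x\}$. *)

theory Defs
  imports "HOL-Analysis.Analysis"
begin

text \<open>Elements of PL_0(I), represented as functions real => real that are the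
  identity outside [0,1] (a normalisation convention).\<close>
definition pl0 :: "(real \<Rightarrow> real) \<Rightarrow> bool" where
  "pl0 f \<longleftrightarrow>
     (\<forall>x. x \<notin> {0..1} \<longrightarrow> f x = x) \<and>
     f 0 = 0 \<and> f 1 = 1 \<and>
     strict_mono_on {0..1} f \<and>
     continuous_on {0..1} f \<and>
     f ` {0..1} = {0..1} \<and>
     (\<exists>P. finite P \<and> P \<subseteq> {0..1} \<and> {0, 1} \<subseteq> P \<and>
        (\<forall>a\<in>P. \<forall>b\<in>P. a < b \<and> {a<..<b} \<inter> P = {} \<longrightarrow>
           (\<exists>m c. \<forall>x\<in>{a..b}. f x = m * x + c)))"

text \<open>Right action: t(fg) = g(f(t)), so the product fg is g o f.\<close>
definition pl_mult :: "(real \<Rightarrow> real) \<Rightarrow> (real \<Rightarrow> real) \<Rightarrow> (real \<Rightarrow> real)" where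
  "pl_mult f g = g \<circ> f"

definition pl_inv :: "(real \<Rightarrow> real) \<Rightarrow> (real \<Rightarrow> real)" where
  "pl_inv f = inv f"

definition pl_conj :: "(real \<Rightarrow> real) \<Rightarrow> (real \<Rightarrow> real) \<Rightarrow> (real \<Rightarrow> real)" where
  "pl_conj a b = pl_mult (pl_mult (pl_inv b) a) b"

definition pl_comm :: "(real \<Rightarrow> real) \<Rightarrow> (real \<Rightarrow> real) \<Rightarrow> (real \<Rightarrow> real)" where
  "pl_comm a b = pl_mult (pl_mult (pl_mult a b) (pl_inv a)) (pl_inv b)"

definition pl_supp :: "(real \<Rightarrow> real) \<Rightarrow> real set" where
  "pl_supp f = {x. f x \<noteq> x}"

definition orbitals :: "(real \<Rightarrow> real) \<Rightarrow> real set set" where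
  "orbitals f = components (pl_supp f)"

end

theory Submission
  imports Defs
begin

text \<open>Write \<open>A = (a, b)\<close>. It suffices that \<open>f\<^sub>1\<close> fixes \<open>a\<close> and \<open>b\<close>: an orbital of
  \<open>f\<^sub>1\<close> meeting \<open>A\<close> then cannot cross the frontier of \<open>A\<close>. Suppose \<open>f\<^sub>0\<close> fixes \<open>a\<close>
  while \<open>f\<^sub>1\<close> moves it, and let \<open>(c, d)\<close> be the orbital of \<open>f\<^sub>1\<close> containing \<open>a\<close>.
  With \<open>g = f\<^sub>0 f\<^sub>1\<^sup>-\<^sup>1\<close>, \<open>h\<^sub>1 = f\<^sub>1\<^bsup>f\<^sub>0\<^esup>\<close>, \<open>h\<^sub>2 = f\<^sub>1\<^bsup>f\<^sub>0\<^sup>2\<^esup>\<close>, the hypotheses say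
  that \<open>g\<close> commutes with \<open>h\<^sub>1\<close> and \<open>h\<^sub>2\<close>. Hence the conjugates of \<open>g\<close> by \<open>f\<^sub>0\<close> and
  \<open>f\<^sub>0\<^sup>2\<close> commute with \<open>f\<^sub>1\<close> and fix the finitely many boundary points of its fixed set,
  so \<open>g\<close> fixes \<open>f\<^sub>0\<^sup>i c, f\<^sub>0\<^sup>i d\<close> for \<open>i = 1, 2\<close>. A PL map commuting with a homeomorphism
  and fixing a point of one of its orbitals is the identity on that orbital; since \<open>g\<close>
  moves \<open>a\<close>, it has no fixed point in \<open>f\<^sub>0\<^sup>i (c, d)\<close>, which forces \<open>f\<^sub>0\<close> to fix \<open>c\<close>
  and \<open>d\<close>. Now \<open>(c, d)\<close> is an orbital of \<open>g\<close>, and \<open>h\<^sub>1\<close>, \<open>h\<^sub>2\<close> commute with \<open>g\<close> and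
  have the same germ at \<open>c\<close> (germs of PL maps fixing \<open>c\<close> commute), so they agree on
  \<open>(c, d)\<close>: \<open>f\<^sub>0\<close> commutes with \<open>f\<^sub>1\<close> there. As \<open>f\<^sub>0\<close> fixes \<open>a\<close>, it is the identity on
  \<open>(c, d)\<close>, so \<open>a\<close> is not an end of an orbital of \<open>f\<^sub>0\<close>.\<close>

section \<open>Increasing homeomorphisms of the line\<close>

definition incr_homeo :: "(real \<Rightarrow> real) \<Rightarrow> bool" where
  "incr_homeo u \<longleftrightarrow> strict_mono u \<and> surj u"

lemma incr_homeo_less_iff: "incr_homeo u \<Longrightarrow> u x < u y \<longleftrightarrow> x < y"
  by (simp add: incr_homeo_def strict_mono_less)

lemma incr_homeo_le_iff: "incr_homeo u \<Longrightarrow> u x \<le> u y \<longleftrightarrow> x \<le> y"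
  by (simp add: incr_homeo_def strict_mono_less_eq)

lemma incr_homeo_eq_iff: "incr_homeo u \<Longrightarrow> u x = u y \<longleftrightarrow> x = y"
  by (simp add: incr_homeo_def strict_mono_eq)

lemma incr_homeo_continuous_on: "incr_homeo u \<Longrightarrow> continuous_on UNIV u"
  by (rule continuous_onI_mono) (auto simp: incr_homeo_def strict_mono_less_eq)

lemma incr_homeo_isCont: "incr_homeo u \<Longrightarrow> isCont u x"
  using incr_homeo_continuous_on continuous_on_eq_continuous_at by blast

lemma incr_homeo_f_inv_f [simp]: "incr_homeo u \<Longrightarrow> u (inv u y) = y"
  by (simp add: incr_homeo_def surj_f_inv_f)

lemma incr_homeo_inv_f_f [simp]: "incr_homeo u \<Longrightarrow> inv u (u y) = y"
  by (simp add: incr_homeo_def strict_mono_imp_inj_on)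

lemma incr_homeo_inv: assumes "incr_homeo u" shows "incr_homeo (inv u)"
proof -
  have "strict_mono (inv u)"
  proof (rule strict_monoI)
    fix x y :: real assume "x < y"
    then show "inv u x < inv u y"
      using incr_homeo_less_iff[OF assms, of "inv u x" "inv u y"] assms by simp
  qed
  moreover have "surj (inv u)"
    by (metis assms incr_homeo_inv_f_f surjI)
  ultimately show ?thesis by (simp add: incr_homeo_def)
qed

lemma incr_homeo_comp: "incr_homeo u \<Longrightarrow> incr_homeo v \<Longrightarrow> incr_homeo (\<lambda>x. u (v x))"
  using comp_surj[of v u] by (auto simp: incr_homeo_def strict_mono_def comp_def)

lemma incr_homeo_id: "incr_homeo (\<lambda>x. x)"
  by (simp add: incr_homeo_def strict_mono_def)

lemma incr_homeo_funpow: "incr_homeo u \<Longrightarrow> incr_homeo (u ^^ n)"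
  by (induction n)
    (simp_all add: incr_homeo_id[unfolded id_def[symmetric]]
      incr_homeo_comp[of u, unfolded comp_def[symmetric]])

lemma incr_homeo_inv_comp:
  "incr_homeo u \<Longrightarrow> incr_homeo v \<Longrightarrow> inv (\<lambda>x. u (v x)) = (\<lambda>x. inv v (inv u x))"
  using o_inv_distrib[of u v] by (auto simp: incr_homeo_def comp_def strict_mono_imp_inj_on bij_def)

lemma pl0_incr_homeo:
  assumes "pl0 f" shows "incr_homeo f"
proof -
  have outside: "\<And>x. x < 0 \<or> 1 < x \<Longrightarrow> f x = x"
    and inside: "\<And>x. x \<in> {0..1} \<Longrightarrow> f x \<in> {0..1}"
    and mono: "strict_mono_on {0..1} f" and onto: "f ` {0..1} = {0..1}"
    using assms by (auto simp: pl0_def)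
  have "strict_mono f"
  proof (rule strict_monoI)
    fix x y :: real assume xy: "x < y"
    consider "x < 0" | "x \<in> {0..1}" "y \<in> {0..1}" | "x \<in> {0..1}" "1 < y" | "1 < x"
      using xy by fastforce
    then show "f x < f y"
    proof cases
      case 1
      then show ?thesis
        using xy outside[of x] outside[of y] inside[of y] by (cases "y \<in> {0..1}") auto
    next
      case 2
      then show ?thesis using strict_mono_onD[OF mono] xy by blast
    next
      case 3
      then show ?thesis using outside[of y] inside[of x] by auto
    next
      case 4
      then show ?thesis using xy outside[of x] outside[of y] by auto
    qed
  qed
  moreover have "surj f"
  proof (rule surjI)
    fix y :: real
    show "f (if y \<in> {0..1} then inv_into {0..1} f y else y) = y"
      using onto outside[of y] f_inv_into_f[of y f "{0..1}"] by auto
  qed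
  ultimately show ?thesis by (simp add: incr_homeo_def)
qed

section \<open>Affine right germs\<close>

definition right_affine :: "(real \<Rightarrow> real) \<Rightarrow> real \<Rightarrow> bool" where
  "right_affine f x \<longleftrightarrow> (\<exists>e>0. \<exists>m k. \<forall>y\<in>{x..x+e}. f y = m * y + k)"

lemma incr_homeo_right_nhd:
  assumes "incr_homeo g" and "e > 0"
  obtains d where "d > 0" "\<And>y. y \<in> {x..x+d} \<Longrightarrow> g y \<in> {g x..g x+e}"
proof -
  obtain z where z: "g z = g x + e"
    using assms(1) by (metis incr_homeo_f_inv_f)
  then have "x < z"
    using incr_homeo_less_iff[OF assms(1), of x z] assms(2) by simp
  moreover have "g y \<in> {g x..g x+e}" if "y \<in> {x..x+(z-x)}" for y
    using that incr_homeo_le_iff[OF assms(1), of y z] incr_homeo_le_iff[OF assms(1), of x y]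
    by (auto simp: z)
  ultimately show ?thesis using that[of "z - x"] by simp
qed

lemma right_affine_comp:
  assumes f: "right_affine f (g x)" and g: "right_affine g x" and hg: "incr_homeo g"
  shows "right_affine (\<lambda>y. f (g y)) x"
proof -
  obtain e1 m1 k1 where e1: "e1 > 0" "\<forall>y\<in>{x..x+e1}. g y = m1 * y + k1"
    using g by (auto simp: right_affine_def)
  obtain e2 m2 k2 where e2: "e2 > 0" "\<forall>y\<in>{g x..g x+e2}. f y = m2 * y + k2"
    using f by (auto simp: right_affine_def)
  obtain d where d: "d > 0" "\<And>y. y \<in> {x..x+d} \<Longrightarrow> g y \<in> {g x..g x+e2}"
    using incr_homeo_right_nhd[OF hg e2(1)] by blast
  have "f (g y) = (m2 * m1) * y + (m2 * k1 + k2)" if y: "y \<in> {x..x + min e1 d}" for y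
  proof -
    have "f (g y) = m2 * g y + k2" using e2(2) d(2)[of y] y by auto
    also have "\<dots> = m2 * (m1 * y + k1) + k2" using e1(2) y by auto
    finally show ?thesis by (simp add: algebra_simps)
  qed
  then show ?thesis
    unfolding right_affine_def using e1(1) d(1) by (intro exI[of _ "min e1 d"]) fastforce
qed

lemma right_affine_inv:
  assumes f: "right_affine f x" and hf: "incr_homeo f"
  shows "right_affine (inv f) (f x)"
proof -
  obtain e m k where e: "e > 0" and lin: "\<forall>y\<in>{x..x+e}. f y = m * y + k"
    using f by (auto simp: right_affine_def)
  have "f x < f (x + e)"
    using incr_homeo_less_iff[OF hf] e by simp
  then have "m * e > 0"
    using lin e by (simp add: algebra_simps)
  then have m: "m > 0"
    using e by (simp add: zero_less_mult_iff)
  have "inv f y = (1/m) * y + (- k/m)" if y: "y \<in> {f x..f x + m*e}" for y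
  proof -
    have "(y - k) / m \<in> {x..x+e}"
      using y lin e m by (auto simp: field_simps)
    then have "f ((y - k) / m) = y"
      using lin m by auto
    then have "inv f y = (y - k) / m"
      using hf by (metis incr_homeo_inv_f_f)
    then show ?thesis by (simp add: diff_divide_distrib)
  qed
  then show ?thesis
    unfolding right_affine_def using \<open>m * e > 0\<close> by blast
qed

definition right_affine_homeo :: "(real \<Rightarrow> real) \<Rightarrow> bool" where
  "right_affine_homeo f \<longleftrightarrow> incr_homeo f \<and> (\<forall>x. right_affine f x)"

lemma right_affine_homeo_comp:
  "right_affine_homeo f \<Longrightarrow> right_affine_homeo g \<Longrightarrow> right_affine_homeo (\<lambda>x. f (g x))"
  by (simp add: right_affine_homeo_def incr_homeo_comp right_affine_comp)

lemma right_affine_homeo_inv: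
  assumes "right_affine_homeo f" shows "right_affine_homeo (inv f)"
proof -
  have hf: "incr_homeo f" using assms by (simp add: right_affine_homeo_def)
  have "right_affine (inv f) y" for y
    using right_affine_inv[of f "inv f y"] assms hf by (simp add: right_affine_homeo_def)
  then show ?thesis using incr_homeo_inv[OF hf] by (simp add: right_affine_homeo_def)
qed

lemma right_affine_germs_commute:
  assumes F: "right_affine_homeo F" and G: "right_affine_homeo G"
    and Fc: "F c = c" and Gc: "G c = c"
  obtains e where "e > 0" "\<And>z. z \<in> {c..c+e} \<Longrightarrow> F (G z) = G (F z)"
proof -
  obtain e1 m1 k1 where e1: "e1 > 0" "\<forall>y\<in>{c..c+e1}. F y = m1 * y + k1"
    using F unfolding right_affine_homeo_def right_affine_def by blast
  obtain e2 m2 k2 where e2: "e2 > 0" "\<forall>y\<in>{c..c+e2}. G y = m2 * y + k2"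
    using G unfolding right_affine_homeo_def right_affine_def by blast
  have k1: "k1 = c - m1 * c" and k2: "k2 = c - m2 * c"
    using e1 e2 Fc Gc by force+
  obtain d1 where d1: "d1 > 0" "\<And>y. y \<in> {c..c+d1} \<Longrightarrow> F y \<in> {c..c+e2}"
    using incr_homeo_right_nhd[of F e2 c] F e2(1) Fc by (auto simp: right_affine_homeo_def)
  obtain d2 where d2: "d2 > 0" "\<And>y. y \<in> {c..c+d2} \<Longrightarrow> G y \<in> {c..c+e1}"
    using incr_homeo_right_nhd[of G e1 c] G e1(1) Gc by (auto simp: right_affine_homeo_def)
  define e where "e = min (min e1 e2) (min d1 d2)"
  have "F (G z) = G (F z)" if z: "z \<in> {c..c+e}" for z
  proof -
    have "F (G z) = m1 * (m2 * z + k2) + k1"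
      using e1(2) e2(2) d2(2)[of z] z by (auto simp: e_def)
    moreover have "G (F z) = m2 * (m1 * z + k1) + k2"
      using e1(2) e2(2) d1(2)[of z] z by (auto simp: e_def)
    ultimately show ?thesis by (simp add: k1 k2 algebra_simps)
  qed
  moreover have "e > 0" using e1 e2 d1 d2 by (simp add: e_def)
  ultimately show ?thesis using that by blast
qed

section \<open>Elements of PL_0(I)\<close>

lemma pl0_fixes_outside:
  assumes "pl0 f" and "x \<notin> {0<..<1}" shows "f x = x"
proof -
  have "\<forall>x. x \<notin> {0..1} \<longrightarrow> f x = x" "f 0 = 0" "f 1 = 1"
    using assms(1) unfolding pl0_def by simp_all
  then show ?thesis using assms(2) by (cases "x \<in> {0..1}") auto
qed

lemma pl0_breakpoints:
  assumes "pl0 f"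
  obtains P where "finite P" "{0, 1} \<subseteq> P"
    and "\<And>a b. a \<in> P \<Longrightarrow> b \<in> P \<Longrightarrow> a < b \<Longrightarrow> {a<..<b} \<inter> P = {} \<Longrightarrow>
                 \<exists>m c. \<forall>y\<in>{a..b}. f y = m * y + c"
proof -
  from assms obtain P where "finite P" "{0, 1} \<subseteq> P"
    "\<forall>a\<in>P. \<forall>b\<in>P. a < b \<and> {a<..<b} \<inter> P = {} \<longrightarrow> (\<exists>m c. \<forall>x\<in>{a..b}. f x = m * x + c)"
    unfolding pl0_def by (elim conjE exE) simp
  then show ?thesis using that by simp
qed

lemma pl0_affine_cover:
  assumes "pl0 f"
  obtains P where "finite P" "1 \<in> P"
    "\<And>x. x \<in> {0..<1} \<Longrightarrow>
       \<exists>p\<in>P. \<exists>q\<in>P. p \<le> x \<and> x < q \<and> (\<exists>m c. \<forall>y\<in>{p..q}. f y = m * y + c)"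
proof -
  obtain P where P: "finite P" "{0, 1} \<subseteq> P"
    and lin: "\<And>a b. a \<in> P \<Longrightarrow> b \<in> P \<Longrightarrow> a < b \<Longrightarrow> {a<..<b} \<inter> P = {} \<Longrightarrow>
                 \<exists>m c. \<forall>y\<in>{a..b}. f y = m * y + c"
    using pl0_breakpoints[OF assms] by blast
  have "\<exists>p\<in>P. \<exists>q\<in>P. p \<le> x \<and> x < q \<and> (\<exists>m c. \<forall>y\<in>{p..q}. f y = m * y + c)"
    if x: "x \<in> {0..<1}" for x
  proof -
    define p where "p = Max {p\<in>P. p \<le> x}"
    define q where "q = Min {q\<in>P. x < q}"
    have below: "finite {p\<in>P. p \<le> x}" "{p\<in>P. p \<le> x} \<noteq> {}"
      and above: "finite {q\<in>P. x < q}" "{q\<in>P. x < q} \<noteq> {}"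
      using P x by auto
    have p: "p \<in> P" "p \<le> x" and q: "q \<in> P" "x < q"
      using Max_in[OF below] Min_in[OF above] by (auto simp: p_def q_def)
    have "{p<..<q} \<inter> P = {}"
    proof (rule ccontr)
      assume "{p<..<q} \<inter> P \<noteq> {}"
      then obtain z where z: "z \<in> P" "p < z" "z < q" by auto
      show False
      proof (cases "z \<le> x")
        case True
        then have "z \<le> p" unfolding p_def using below z by (intro Max_ge) auto
        then show False using z by simp
      next
        case False
        then have "q \<le> z" unfolding q_def using above z by (intro Min_le) auto
        then show False using z by simp
      qed
    qed
    then show ?thesis using lin[OF p(1) q(1)] p q by force
  qed
  then show ?thesis using that P by blast
qed

lemma pl0_right_affine:
  assumes "pl0 f" shows "right_affine f x"
proof (cases "x \<in> {0..<1}")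
  case True
  then obtain p q m c where "p \<le> x" "x < q" "\<forall>y\<in>{p..q}. f y = m * y + c"
    using pl0_affine_cover[OF assms] by metis
  then have "\<forall>y\<in>{x..x+(q-x)}. f y = m * y + c" by auto
  then show ?thesis unfolding right_affine_def using \<open>x < q\<close> by (intro exI[of _ "q - x"]) auto
next
  case False
  define e where "e = (if x < 0 then -x else 1)"
  have "e > 0" "\<forall>y\<in>{x..x+e}. f y = 1 * y + 0"
    using False pl0_fixes_outside[OF assms] by (auto simp: e_def)
  then show ?thesis unfolding right_affine_def by blast
qed

lemma pl0_right_affine_homeo: "pl0 f \<Longrightarrow> right_affine_homeo f"
  by (simp add: right_affine_homeo_def pl0_incr_homeo pl0_right_affine)

definition fix_frontier :: "(real \<Rightarrow> real) \<Rightarrow> real set" where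
  "fix_frontier f = {x. f x = x \<and> (\<forall>e>0. \<exists>y. \<bar>y - x\<bar> < e \<and> f y \<noteq> y)}"

lemma fix_frontier_subset:
  assumes "pl0 f" shows "fix_frontier f \<subseteq> {0..1}"
proof
  fix x assume x: "x \<in> fix_frontier f"
  show "x \<in> {0..1}"
  proof (rule ccontr)
    assume "x \<notin> {0..1}"
    then have "min \<bar>x\<bar> \<bar>x - 1\<bar> > 0" by auto
    then obtain y where "\<bar>y - x\<bar> < min \<bar>x\<bar> \<bar>x - 1\<bar>" "f y \<noteq> y"
      using x unfolding fix_frontier_def by blast
    moreover have "y \<notin> {0<..<1}"
      using calculation(1) \<open>x \<notin> {0..1}\<close> by auto
    ultimately show False using pl0_fixes_outside[OF assms] by blast
  qed
qed

lemma affine_fix_frontier_subset: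
  assumes lin: "\<forall>y\<in>{p..q}. f y = m * y + c"
  shows "fix_frontier f \<inter> {p<..<q} \<subseteq> {c / (1 - m)}"
proof
  fix x assume x: "x \<in> fix_frontier f \<inter> {p<..<q}"
  then have fixed: "m * x + c = x" using lin by (auto simp: fix_frontier_def)
  have "m \<noteq> 1"
  proof
    assume "m = 1"
    then have id: "\<forall>y\<in>{p..q}. f y = y" using lin fixed by auto
    have "min (x - p) (q - x) > 0" using x by auto
    then obtain y where y: "\<bar>y - x\<bar> < min (x - p) (q - x)" "f y \<noteq> y"
      using x unfolding fix_frontier_def by blast
    then have "y \<in> {p..q}" by (auto simp: abs_less_iff)
    then show False using id y(2) by blast
  qed
  moreover have "(1 - m) * x = c" using fixed by (simp add: algebra_simps)
  ultimately show "x \<in> {c / (1 - m)}" by (simp add: eq_divide_eq mult.commute)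
qed

lemma finite_fix_frontier:
  assumes "pl0 f" shows "finite (fix_frontier f)"
proof -
  obtain P where P: "finite P" "1 \<in> P"
    and cover: "\<And>x. x \<in> {0..<1} \<Longrightarrow>
       \<exists>p\<in>P. \<exists>q\<in>P. p \<le> x \<and> x < q \<and> (\<exists>m c. \<forall>y\<in>{p..q}. f y = m * y + c)"
    by (rule pl0_affine_cover[OF assms]) blast
  define Q where "Q = {(p, q) \<in> P \<times> P. \<exists>m c. \<forall>y\<in>{p..q}. f y = m * y + c}"
  have pieces: "finite (fix_frontier f \<inter> {p<..<q})" if pq: "(p, q) \<in> Q" for p q
  proof -
    obtain m c where "\<forall>y\<in>{p..q}. f y = m * y + c" using pq by (auto simp: Q_def)
    from finite_subset[OF affine_fix_frontier_subset[OF this]] show ?thesis by simp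
  qed
  have "Q \<subseteq> P \<times> P" by (auto simp: Q_def)
  then have "finite Q" using finite_subset finite_cartesian_product[OF P(1) P(1)] by blast
  then have "finite (\<Union>(p, q)\<in>Q. fix_frontier f \<inter> {p<..<q})"
  proof (rule finite_UN_I)
    fix pq assume "pq \<in> Q"
    then show "finite (case pq of (p, q) \<Rightarrow> fix_frontier f \<inter> {p<..<q})"
      using pieces by (cases pq) simp
  qed
  then have "finite (P \<union> (\<Union>(p, q)\<in>Q. fix_frontier f \<inter> {p<..<q}))"
    using P(1) by (rule finite_UnI[rotated])
  moreover have "fix_frontier f \<subseteq> P \<union> (\<Union>(p, q)\<in>Q. fix_frontier f \<inter> {p<..<q})"
  proof
    fix x assume x: "x \<in> fix_frontier f"
    show "x \<in> P \<union> (\<Union>(p, q)\<in>Q. fix_frontier f \<inter> {p<..<q})"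
    proof (cases "x \<in> P")
      case False
      then have "x \<noteq> 1" using P(2) by blast
      then have "x \<in> {0..<1}" using x fix_frontier_subset[OF assms] by auto
      then obtain p q where pq: "(p, q) \<in> Q" "p \<le> x" "x < q"
        using cover unfolding Q_def by blast
      moreover have "p \<noteq> x" using False pq(1) by (auto simp: Q_def)
      ultimately have "x \<in> fix_frontier f \<inter> {p<..<q}" using x by auto
      then show ?thesis using pq(1) by blast
    qed simp
  qed
  ultimately show ?thesis by (rule finite_subset[rotated])
qed

section \<open>Dynamics on an orbital\<close>

definition is_orbital :: "(real \<Rightarrow> real) \<Rightarrow> real \<Rightarrow> real \<Rightarrow> bool" where
  "is_orbital u p q \<longleftrightarrow> p < q \<and> u p = p \<and> u q = q \<and> (\<forall>x\<in>{p<..<q}. u x \<noteq> x)"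

lemma orbital_maps_into:
  assumes "incr_homeo u" "is_orbital u p q" "x \<in> {p<..<q}"
  shows "u x \<in> {p<..<q}"
  using assms incr_homeo_less_iff[OF assms(1), of p x] incr_homeo_less_iff[OF assms(1), of x q]
  by (auto simp: is_orbital_def)

lemma orbital_funpow_maps_into:
  assumes "incr_homeo u" "is_orbital u p q" "x \<in> {p<..<q}"
  shows "(u ^^ n) x \<in> {p<..<q}"
  by (induction n) (use assms orbital_maps_into in auto)

lemma orbital_inv:
  assumes u: "incr_homeo u" and orb: "is_orbital u p q"
  shows "is_orbital (inv u) p q"
  using orb incr_homeo_inv_f_f[OF u] incr_homeo_f_inv_f[OF u] unfolding is_orbital_def by metis

lemma orbital_conj:
  assumes k: "incr_homeo k" and orb: "is_orbital u p q"
  shows "is_orbital (\<lambda>x. k (u (inv k x))) (k p) (k q)"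
proof -
  have "k (u (inv k x)) \<noteq> x" if x: "x \<in> {k p<..<k q}" for x
  proof
    assume "k (u (inv k x)) = x"
    then have "u (inv k x) = inv k x" by (metis k incr_homeo_inv_f_f)
    moreover have "inv k x \<in> {p<..<q}"
      using x incr_homeo_less_iff[OF k, of p "inv k x"] incr_homeo_less_iff[OF k, of "inv k x" q] k
      by auto
    ultimately show False using orb by (auto simp: is_orbital_def)
  qed
  then show ?thesis
    using orb k incr_homeo_less_iff[OF k] by (auto simp: is_orbital_def)
qed

lemma commute_on_orbital_inv:
  assumes u: "incr_homeo u" and orb: "is_orbital u p q"
    and comm: "\<forall>y\<in>{p<..<q}. v (u y) = u (v y)"
  shows "\<forall>y\<in>{p<..<q}. v (inv u y) = inv u (v y)"
proof
  fix y assume "y \<in> {p<..<q}"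
  then have "inv u y \<in> {p<..<q}"
    using orbital_maps_into[OF incr_homeo_inv[OF u] orbital_inv[OF u orb]] by blast
  then have "v y = u (v (inv u y))"
    using comm u by (metis incr_homeo_f_inv_f)
  then show "v (inv u y) = inv u (v y)"
    using u by simp
qed

lemma commute_on_orbital_funpow:
  assumes u: "incr_homeo u" and orb: "is_orbital u p q"
    and comm: "\<forall>y\<in>{p<..<q}. v (u y) = u (v y)" and x: "x \<in> {p<..<q}"
  shows "v ((u ^^ n) x) = (u ^^ n) (v x)"
proof (induction n)
  case (Suc n)
  have "(u ^^ n) x \<in> {p<..<q}" using orbital_funpow_maps_into[OF u orb x] .
  then show ?case using comm Suc.IH by simp
qed simp

text \<open>On an orbital, iterates of a point moving left converge to the left end, because the
  limit is a fixed point.\<close>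
lemma orbital_funpow_tendsto_left:
  assumes u: "incr_homeo u" and orb: "is_orbital u p q"
    and x: "x \<in> {p<..<q}" and left: "u x < x"
  shows "(\<lambda>n. (u ^^ n) x) \<longlonglongrightarrow> p"
proof -
  define X where "X = (\<lambda>n. (u ^^ n) x)"
  have "X (Suc n) < X n" for n
    by (induction n) (use left incr_homeo_less_iff[OF u] in \<open>auto simp: X_def\<close>)
  then have dec: "decseq X"
    by (simp add: decseq_Suc_iff less_imp_le)
  have in_orb: "X n \<in> {p<..<q}" for n
    using orbital_funpow_maps_into[OF u orb x] by (simp add: X_def)
  then have "\<forall>i. p \<le> X i" by (simp add: less_imp_le)
  then obtain L where L: "X \<longlonglongrightarrow> L" "\<forall>i. L \<le> X i"
    using decseq_convergent[OF dec] by blast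
  have "p \<le> L"
    using LIMSEQ_le_const[OF L(1), of p] in_orb by (auto intro: less_imp_le)
  moreover have "L < q"
    using L(2) in_orb[of 0] by (meson greaterThanLessThan_iff le_less_trans)
  moreover have "u L = L"
  proof (rule LIMSEQ_unique)
    show "(\<lambda>n. u (X n)) \<longlonglongrightarrow> u L"
      using isCont_tendsto_compose[OF incr_homeo_isCont[OF u] L(1)] .
    show "(\<lambda>n. u (X n)) \<longlonglongrightarrow> L"
      using LIMSEQ_Suc[OF L(1)] by (simp add: X_def)
  qed
  ultimately have "L = p"
    using orb by (force simp: is_orbital_def)
  then show ?thesis using L(1) by (simp add: X_def)
qed

lemma orbital_contracting_direction:
  assumes u: "incr_homeo u" and orb: "is_orbital u p q" and x: "x \<in> {p<..<q}"
  obtains w where "incr_homeo w" "is_orbital w p q" "w x < x"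
    "\<And>v. \<forall>y\<in>{p<..<q}. v (u y) = u (v y) \<Longrightarrow> \<forall>y\<in>{p<..<q}. v (w y) = w (v y)"
proof (cases "u x < x")
  case True
  show ?thesis by (rule that[OF u orb True])
next
  case False
  then have "x < u x"
    using orb x by (auto simp: is_orbital_def order_less_le)
  then have "inv u x < inv u (u x)"
    by (simp only: incr_homeo_less_iff[OF incr_homeo_inv[OF u]])
  then have "inv u x < x"
    using u by simp
  then show ?thesis
    by (rule that[OF incr_homeo_inv[OF u] orbital_inv[OF u orb]])
      (rule commute_on_orbital_inv[OF u orb])
qed

lemma orbital_push_near_left_end:
  assumes u: "incr_homeo u" and orb: "is_orbital u p q" and x: "x \<in> {p<..<q}" and e: "e > 0"
  obtains w n where "incr_homeo w" "is_orbital w p q" "w x < x" "(w ^^ n) x < p + e"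
    "\<And>v. \<forall>y\<in>{p<..<q}. v (u y) = u (v y) \<Longrightarrow> \<forall>y\<in>{p<..<q}. v (w y) = w (v y)"
proof -
  obtain w where w: "incr_homeo w" "is_orbital w p q" "w x < x"
    and comm_w: "\<And>v. \<forall>y\<in>{p<..<q}. v (u y) = u (v y) \<Longrightarrow> \<forall>y\<in>{p<..<q}. v (w y) = w (v y)"
    using orbital_contracting_direction[OF u orb x] by blast
  obtain n where "(w ^^ n) x < p + e"
    using order_tendstoD(2)[OF orbital_funpow_tendsto_left[OF w(1,2) x w(3)], of "p + e"] e
    by (auto dest: eventually_happens)
  from that[OF w this comm_w] show ?thesis .
qed

text \<open>Maps commuting with \<open>u\<close> on an orbital are determined there by their germ at the left end:
  every point is pushed into that germ by a power of \<open>u\<close> or of its inverse.\<close>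
lemma commuting_agree_on_orbital:
  assumes u: "incr_homeo u" and orb: "is_orbital u p q"
    and comm1: "\<forall>y\<in>{p<..<q}. v1 (u y) = u (v1 y)"
    and comm2: "\<forall>y\<in>{p<..<q}. v2 (u y) = u (v2 y)"
    and e: "e > 0" and germ: "\<forall>y\<in>{p<..<p+e}. v1 y = v2 y"
  shows "\<forall>x\<in>{p<..<q}. v1 x = v2 x"
proof
  fix x assume x: "x \<in> {p<..<q}"
  obtain w n where w: "incr_homeo w" "is_orbital w p q" and n: "(w ^^ n) x < p + e"
    and comm_w: "\<And>v. \<forall>y\<in>{p<..<q}. v (u y) = u (v y) \<Longrightarrow> \<forall>y\<in>{p<..<q}. v (w y) = w (v y)"
    using orbital_push_near_left_end[OF u orb x e] by blast
  then have "v1 ((w ^^ n) x) = v2 ((w ^^ n) x)"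
    using germ orbital_funpow_maps_into[OF w(1,2) x] by auto
  then have "(w ^^ n) (v1 x) = (w ^^ n) (v2 x)"
    using commute_on_orbital_funpow[OF w(1,2) comm_w[OF comm1] x]
      commute_on_orbital_funpow[OF w(1,2) comm_w[OF comm2] x] by simp
  then show "v1 x = v2 x"
    using incr_homeo_eq_iff[OF incr_homeo_funpow[OF w(1)]] by blast
qed

text \<open>Two consecutive iterates of a fixed point of \<open>v\<close> lie in the affine germ of \<open>v\<close> at \<open>p\<close>,
  so that germ is the identity.\<close>
lemma commuting_fixes_orbital:
  assumes u: "incr_homeo u" and orb: "is_orbital u p q"
    and comm: "\<forall>y\<in>{p<..<q}. v (u y) = u (v y)"
    and x0: "x0 \<in> {p<..<q}" and fixed: "v x0 = x0" and affine: "right_affine v p"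
  shows "\<forall>x\<in>{p<..<q}. v x = x"
proof -
  obtain e m k where e: "e > 0" and lin: "\<forall>y\<in>{p..p+e}. v y = m * y + k"
    using affine by (auto simp: right_affine_def)
  obtain w n where w: "incr_homeo w" "is_orbital w p q" "w x0 < x0" and n: "(w ^^ n) x0 < p + e"
    and comm_w: "\<And>v. \<forall>y\<in>{p<..<q}. v (u y) = u (v y) \<Longrightarrow> \<forall>y\<in>{p<..<q}. v (w y) = w (v y)"
    using orbital_push_near_left_end[OF u orb x0 e] by blast
  define y1 where "y1 = (w ^^ n) x0"
  define y2 where "y2 = (w ^^ Suc n) x0"
  have y21: "y2 < y1"
    using incr_homeo_less_iff[OF incr_homeo_funpow[OF w(1)], of n "w x0" x0] w(3)
    by (simp add: y1_def y2_def funpow_swap1)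
  have "y1 \<in> {p<..<q}" "y2 \<in> {p<..<q}"
    unfolding y1_def y2_def by (rule orbital_funpow_maps_into[OF w(1,2) x0])+
  then have "y1 \<in> {p..p+e}" "y2 \<in> {p..p+e}"
    using n y21 unfolding y1_def[symmetric] by auto
  moreover have "v y1 = y1" "v y2 = y2"
    using commute_on_orbital_funpow[OF w(1,2) comm_w[OF comm] x0] fixed
    by (simp_all add: y1_def y2_def del: funpow.simps)
  ultimately have y1: "m * y1 + k = y1" and y2: "m * y2 + k = y2"
    using lin by auto
  then have "(m - 1) * (y1 - y2) = 0" by (simp add: algebra_simps)
  then have "m = 1" using y21 by simp
  moreover have "k = 0" using y1 \<open>m = 1\<close> by simp
  ultimately have "\<forall>y\<in>{p<..<p+e}. v y = y"
    using lin by auto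
  then show ?thesis
    using commuting_agree_on_orbital[OF u orb comm _ e, of "\<lambda>y. y"] by simp
qed

section \<open>Commuting maps and fixed points\<close>

lemma commuting_maps_fix_frontier:
  assumes phi: "incr_homeo \<phi>" and comm: "\<And>y. \<phi> (f y) = f (\<phi> y)"
    and x: "x \<in> fix_frontier f"
  shows "\<phi> x \<in> fix_frontier f"
proof -
  have moved: "f (\<phi> y) \<noteq> \<phi> y" if "f y \<noteq> y" for y
    using that comm incr_homeo_eq_iff[OF phi] by metis
  have "\<exists>y. \<bar>y - \<phi> x\<bar> < e \<and> f y \<noteq> y" if e: "e > 0" for e
  proof -
    obtain d where d: "d > 0" "\<And>y. dist y x < d \<Longrightarrow> dist (\<phi> y) (\<phi> x) < e"
      using incr_homeo_isCont[OF phi, of x] e unfolding continuous_at_eps_delta by blast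
    obtain y where y: "\<bar>y - x\<bar> < d" "f y \<noteq> y"
      using x d(1) by (auto simp: fix_frontier_def)
    have "\<bar>\<phi> y - \<phi> x\<bar> < e" using d(2) y(1) by (simp add: dist_real_def)
    then show ?thesis using moved[OF y(2)] by blast
  qed
  moreover have "f (\<phi> x) = \<phi> x" using x comm[of x, symmetric] by (simp add: fix_frontier_def)
  ultimately show ?thesis by (simp add: fix_frontier_def)
qed

lemma strict_mono_invariant_finite_fixed:
  fixes \<phi> :: "real \<Rightarrow> real"
  assumes fin: "finite E" and mono: "strict_mono \<phi>" and inv: "\<phi> ` E \<subseteq> E"
  shows "\<forall>x\<in>E. \<phi> x = x"
proof (rule ccontr)
  define D where "D = {x\<in>E. \<phi> x \<noteq> x}"
  assume "\<not> (\<forall>x\<in>E. \<phi> x = x)"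
  then have D: "finite D" "D \<noteq> {}" using fin by (auto simp: D_def)
  define x where "x = Min D"
  have x: "x \<in> E" "\<phi> x \<noteq> x" using Min_in[OF D] by (auto simp: x_def D_def)
  have below: "\<phi> y = y" if "y \<in> E" "y < x" for y
    using Min_le[OF D(1), of y] that by (force simp: x_def D_def)
  have onto: "\<phi> ` E = E"
    using card_image[OF strict_mono_imp_inj_on[OF mono]] card_subset_eq[OF fin inv] by simp
  show False
  proof (cases "\<phi> x < x")
    case True
    then have "\<phi> (\<phi> x) = \<phi> x" using below inv x(1) by blast
    then show False using x(2) strict_mono_eq[OF mono] by metis
  next
    case False
    then have "x < \<phi> x" using x(2) by simp
    obtain z where z: "z \<in> E" "x = \<phi> z" using onto x(1) by blast
    show False
    proof (cases "z < x")
      case True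
      then show False using below[OF z(1)] z(2) by simp
    next
      case False
      then have "\<phi> x \<le> \<phi> z" using strict_mono_less_eq[OF mono] by simp
      then show False using z(2) \<open>x < \<phi> x\<close> by simp
    qed
  qed
qed

text \<open>The frontier of the fixed set of an element of PL_0(I) is finite, so a homeomorphism
  commuting with it permutes that frontier monotonically and hence fixes it.\<close>
lemma commuting_fixes_fix_frontier:
  assumes f: "pl0 f" and phi: "incr_homeo \<phi>" and comm: "\<And>y. \<phi> (f y) = f (\<phi> y)"
    and x: "x \<in> fix_frontier f"
  shows "\<phi> x = x"
proof -
  have "\<phi> ` fix_frontier f \<subseteq> fix_frontier f"
    using commuting_maps_fix_frontier[of \<phi> f] phi comm by blast
  then show ?thesis
    using strict_mono_invariant_finite_fixed[OF finite_fix_frontier[OF f]] phi x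
    by (simp add: incr_homeo_def)
qed

lemma orbital_around:
  assumes u: "incr_homeo u" and l: "u l = l" "l < a" and r: "u r = r" "a < r"
    and moved: "u a \<noteq> a"
  obtains c d where "c < a" "a < d" "is_orbital u c d"
proof -
  have closed_fix: "closed {x. u x = x}"
    using closed_Collect_eq[OF incr_homeo_continuous_on[OF u] continuous_on_id] by simp
  define L where "L = {x. u x = x} \<inter> {..a}"
  define R where "R = {x. u x = x} \<inter> {a..}"
  define c where "c = Sup L"
  define d where "d = Inf R"
  have "c \<in> L" unfolding c_def
    by (rule closed_contains_Sup) (use l closed_fix in \<open>auto simp: L_def intro: closed_Int\<close>)
  then have c: "u c = c" "c < a" using moved by (auto simp: L_def order_le_less)
  have "d \<in> R" unfolding d_def
    by (rule closed_contains_Inf) (use r closed_fix in \<open>auto simp: R_def intro: closed_Int\<close>)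
  then have d: "u d = d" "a < d" using moved by (auto simp: R_def order_le_less)
  have "u x \<noteq> x" if x: "x \<in> {c<..<d}" for x
  proof
    assume fixed: "u x = x"
    show False
    proof (cases "x \<le> a")
      case True
      then have "x \<le> c" unfolding c_def
        using fixed by (intro cSup_upper) (auto simp: L_def bdd_above_def)
      then show False using x by simp
    next
      case False
      then have "d \<le> x" unfolding d_def
        using fixed by (intro cInf_lower) (auto simp: R_def bdd_below_def)
      then show False using x by simp
    qed
  qed
  then show ?thesis using that c d by (simp add: is_orbital_def)
qed

lemma orbital_ends_fix_frontier:
  assumes "is_orbital u c d"
  shows "c \<in> fix_frontier u" "d \<in> fix_frontier u"
proof -
  have cd: "c < d" "u c = c" "u d = d" and moved: "\<And>y. y \<in> {c<..<d} \<Longrightarrow> u y \<noteq> y"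
    using assms by (auto simp: is_orbital_def)
  have "\<exists>y. \<bar>y - c\<bar> < e \<and> u y \<noteq> y" if "e > 0" for e
  proof (intro exI conjI)
    define y where "y = min (c + e/2) ((c + d)/2)"
    show "\<bar>y - c\<bar> < e" using that cd by (auto simp: y_def)
    show "u y \<noteq> y" using that cd by (intro moved) (auto simp: y_def min_less_iff_disj)
  qed
  then show "c \<in> fix_frontier u" using cd by (simp add: fix_frontier_def)
  have "\<exists>y. \<bar>y - d\<bar> < e \<and> u y \<noteq> y" if "e > 0" for e
  proof (intro exI conjI)
    define y where "y = max (d - e/2) ((c + d)/2)"
    show "\<bar>y - d\<bar> < e" using that cd by (auto simp: y_def)
    show "u y \<noteq> y" using that cd by (intro moved) (auto simp: y_def less_max_iff_disj)
  qed
  then show "d \<in> fix_frontier u" using cd by (simp add: fix_frontier_def)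
qed

text \<open>If \<open>k\<close> fixes \<open>a \<in> (c, d)\<close> but moves \<open>c\<close> (or \<open>d\<close>), then one of \<open>k c, k d, k\<^sup>2 c, k\<^sup>2 d\<close>
  would lie strictly inside one of the intervals \<open>k (c, d)\<close>, \<open>k\<^sup>2 (c, d)\<close>.\<close>
lemma endpoints_fixed_of_fixfree_images:
  fixes k g :: "real \<Rightarrow> real"
  assumes k: "strict_mono k" and a: "k a = a" "c < a" "a < d"
    and ends: "g (k c) = k c" "g (k d) = k d" "g (k (k c)) = k (k c)" "g (k (k d)) = k (k d)"
    and free1: "\<forall>x\<in>{k c<..<k d}. g x \<noteq> x"
    and free2: "\<forall>x\<in>{k (k c)<..<k (k d)}. g x \<noteq> x"
  shows "k c = c" "k d = d"
proof -
  have kc: "k c < a" "k (k c) < a" and kd: "a < k d" "a < k (k d)"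
    using a strict_monoD[OF k] by (metis strict_monoD[OF k])+
  show "k c = c"
  proof (rule ccontr)
    assume "k c \<noteq> c"
    then consider "k c < c" | "c < k c" by (meson neqE)
    then show False
    proof cases
      case 1
      then have "k (k c) < k c" using strict_monoD[OF k] by blast
      then show False using free2 ends(1) kc kd by auto
    next
      case 2
      then have "k c < k (k c)" using strict_monoD[OF k] by blast
      then show False using free1 ends(3) kc kd by auto
    qed
  qed
  show "k d = d"
  proof (rule ccontr)
    assume "k d \<noteq> d"
    then consider "d < k d" | "k d < d" by (meson neqE)
    then show False
    proof cases
      case 1
      then have "k d < k (k d)" using strict_monoD[OF k] by blast
      then show False using free2 ends(2) kc kd by auto
    next
      case 2
      then have "k (k d) < k d" using strict_monoD[OF k] by blast
      then show False using free1 ends(4) kc kd by auto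
    qed
  qed
qed

lemma pl_comm_eq_id_imp_commute:
  assumes a: "incr_homeo a" and b: "incr_homeo b" and comm: "pl_comm a b = id"
  shows "b (a x) = a (b x)"
proof -
  have "inv b (inv a (b (a x))) = x"
    using fun_cong[OF comm, of x] by (simp add: pl_comm_def pl_mult_def pl_inv_def)
  then have "inv a (b (a x)) = b x"
    using b by (metis incr_homeo_f_inv_f)
  then show ?thesis
    using a by (metis incr_homeo_f_inv_f)
qed

lemma commuting_fixfree_on_orbital:
  assumes h: "incr_homeo h" and orb: "is_orbital h p q"
    and comm: "\<And>y. g (h y) = h (g y)" and affine: "right_affine g p"
    and a: "a \<in> {p<..<q}" "g a \<noteq> a"
  shows "\<forall>x\<in>{p<..<q}. g x \<noteq> x"
  using commuting_fixes_orbital[OF h orb _ _ _ affine] comm a by blast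

lemma open_pl_supp: "incr_homeo f \<Longrightarrow> open (pl_supp f)"
  unfolding pl_supp_def
  by (rule open_Collect_neq[OF incr_homeo_continuous_on continuous_on_id, simplified])

text \<open>In the right-action notation of the statement, \<open>g = f\<^sub>0 f\<^sub>1\<^sup>-\<^sup>1\<close>, \<open>h\<^sub>1 = f\<^sub>1\<^bsup>f\<^sub>0\<^esup>\<close> and
  \<open>h\<^sub>2 = f\<^sub>1\<^bsup>f\<^sub>0\<^sup>2\<^esup>\<close>.\<close>
locale pl0_pair =
  fixes f0 f1 g h1 h2 :: "real \<Rightarrow> real"
  assumes pl0_f0: "pl0 f0" and pl0_f1: "pl0 f1"
    and g_def: "g = (\<lambda>x. inv f1 (f0 x))"
    and h1_def: "h1 = (\<lambda>x. f0 (f1 (inv f0 x)))"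
    and h2_def: "h2 = (\<lambda>x. f0 (f0 (f1 (inv f0 (inv f0 x)))))"
    and g_h1_commute: "\<And>x. g (h1 x) = h1 (g x)"
    and g_h2_commute: "\<And>x. g (h2 x) = h2 (g x)"
begin

lemma right_affine_homeos:
  "right_affine_homeo f0" "right_affine_homeo f1" "right_affine_homeo (inv f0)"
  "right_affine_homeo g" "right_affine_homeo h1" "right_affine_homeo h2"
proof -
  show f0: "right_affine_homeo f0" and f1: "right_affine_homeo f1"
    using pl0_f0 pl0_f1 by (simp_all add: pl0_right_affine_homeo)
  show inv0: "right_affine_homeo (inv f0)" using right_affine_homeo_inv[OF f0] .
  show "right_affine_homeo g"
    unfolding g_def by (rule right_affine_homeo_comp[OF right_affine_homeo_inv[OF f1] f0])
  show "right_affine_homeo h1"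
    unfolding h1_def by (rule right_affine_homeo_comp[OF f0 right_affine_homeo_comp[OF f1 inv0]])
  show "right_affine_homeo h2"
    unfolding h2_def
    by (rule right_affine_homeo_comp[OF f0 right_affine_homeo_comp[OF f0
          right_affine_homeo_comp[OF f1 right_affine_homeo_comp[OF inv0 inv0]]]])
qed

lemma incr_homeos: "incr_homeo f0" "incr_homeo f1" "incr_homeo (inv f0)" "incr_homeo g"
  "incr_homeo h1" "incr_homeo h2"
  using right_affine_homeos by (simp_all add: right_affine_homeo_def)

lemma right_affine_f0_g: "right_affine f0 p" "right_affine g p"
  using right_affine_homeos(1,4) by (simp_all add: right_affine_homeo_def)

lemma f0_inv [simp]: "f0 (inv f0 x) = x" "inv f0 (f0 x) = x"
  using incr_homeos(1) by simp_all

lemma g_moves: "f0 a = a \<Longrightarrow> f1 a \<noteq> a \<Longrightarrow> g a \<noteq> a"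
  unfolding g_def using incr_homeos(2) by (metis incr_homeo_f_inv_f)

text \<open>The conjugates \<open>f\<^sub>0\<^sup>-\<^sup>1 g f\<^sub>0\<close> and \<open>f\<^sub>0\<^sup>-\<^sup>2 g f\<^sub>0\<^sup>2\<close> commute with \<open>f\<^sub>1\<close>, so they fix
  the frontier of the fixed set of \<open>f\<^sub>1\<close>.\<close>
lemma g_fixes_images_of_fix_frontier:
  assumes x: "x \<in> fix_frontier f1"
  shows "g (f0 x) = f0 x" "g (f0 (f0 x)) = f0 (f0 x)"
proof -
  define \<phi>1 where "\<phi>1 y = inv f0 (g (f0 y))" for y
  define \<phi>2 where "\<phi>2 y = inv f0 (inv f0 (g (f0 (f0 y))))" for y
  have "\<phi>1 (f1 y) = f1 (\<phi>1 y)" for y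
  proof -
    have "\<phi>1 (f1 y) = inv f0 (g (h1 (f0 y)))" by (simp add: \<phi>1_def h1_def)
    also have "\<dots> = inv f0 (h1 (g (f0 y)))" by (simp only: g_h1_commute)
    also have "\<dots> = f1 (\<phi>1 y)" by (simp add: \<phi>1_def h1_def)
    finally show ?thesis .
  qed
  moreover have "incr_homeo \<phi>1"
    unfolding \<phi>1_def[abs_def]
    by (rule incr_homeo_comp[OF incr_homeos(3) incr_homeo_comp[OF incr_homeos(4,1)]])
  ultimately have "\<phi>1 x = x"
    using commuting_fixes_fix_frontier[OF pl0_f1 _ _ x] by blast
  then show "g (f0 x) = f0 x"
    unfolding \<phi>1_def by (metis f0_inv(1))
  have "\<phi>2 (f1 y) = f1 (\<phi>2 y)" for y
  proof -
    have "\<phi>2 (f1 y) = inv f0 (inv f0 (g (h2 (f0 (f0 y)))))" by (simp add: \<phi>2_def h2_def)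
    also have "\<dots> = inv f0 (inv f0 (h2 (g (f0 (f0 y)))))" by (simp only: g_h2_commute)
    also have "\<dots> = f1 (\<phi>2 y)" by (simp add: \<phi>2_def h2_def)
    finally show ?thesis .
  qed
  moreover have "incr_homeo \<phi>2"
    unfolding \<phi>2_def[abs_def]
    by (rule incr_homeo_comp[OF incr_homeos(3) incr_homeo_comp[OF incr_homeos(3)
          incr_homeo_comp[OF incr_homeos(4) incr_homeo_comp[OF incr_homeos(1,1)]]]])
  ultimately have "\<phi>2 x = x"
    using commuting_fixes_fix_frontier[OF pl0_f1 _ _ x] by blast
  then show "g (f0 (f0 x)) = f0 (f0 x)"
    unfolding \<phi>2_def by (metis f0_inv(1))
qed

lemma g_fixfree_on_conjugate_orbitals:
  assumes orb: "is_orbital f1 c d" and a: "a \<in> {c<..<d}" "f0 a = a" "f1 a \<noteq> a"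
  shows "\<forall>x\<in>{f0 c<..<f0 d}. g x \<noteq> x" "\<forall>x\<in>{f0 (f0 c)<..<f0 (f0 d)}. g x \<noteq> x"
proof -
  have "f0 c < f0 a" "f0 a < f0 d"
    using a(1) by (simp_all add: incr_homeo_less_iff[OF incr_homeos(1)])
  moreover from this have "f0 (f0 c) < f0 (f0 a)" "f0 (f0 a) < f0 (f0 d)"
    by (simp_all add: incr_homeo_less_iff[OF incr_homeos(1)])
  ultimately have a1: "a \<in> {f0 c<..<f0 d}" and a2: "a \<in> {f0 (f0 c)<..<f0 (f0 d)}"
    by (simp_all add: a(2))
  have "is_orbital h1 (f0 c) (f0 d)"
    unfolding h1_def by (rule orbital_conj[OF incr_homeos(1) orb])
  then show "\<forall>x\<in>{f0 c<..<f0 d}. g x \<noteq> x"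
    by (rule commuting_fixfree_on_orbital[OF incr_homeos(5) _ g_h1_commute right_affine_f0_g(2) a1
          g_moves[OF a(2,3)]])
  have f00: "incr_homeo (\<lambda>x. f0 (f0 x))"
    by (rule incr_homeo_comp[OF incr_homeos(1,1)])
  have "is_orbital h2 (f0 (f0 c)) (f0 (f0 d))"
    using orbital_conj[OF f00 orb] incr_homeo_inv_comp[OF incr_homeos(1) incr_homeos(1)]
    by (simp add: h2_def)
  then show "\<forall>x\<in>{f0 (f0 c)<..<f0 (f0 d)}. g x \<noteq> x"
    by (rule commuting_fixfree_on_orbital[OF incr_homeos(6) _ g_h2_commute right_affine_f0_g(2) a2
          g_moves[OF a(2,3)]])
qed

lemma f0_fixes_orbital_ends:
  assumes orb: "is_orbital f1 c d" and a: "a \<in> {c<..<d}" "f0 a = a" "f1 a \<noteq> a"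
  shows "f0 c = c" "f0 d = d"
proof -
  have ends: "c \<in> fix_frontier f1" "d \<in> fix_frontier f1"
    using orbital_ends_fix_frontier[OF orb] by simp_all
  have "strict_mono f0" using incr_homeos(1) by (simp add: incr_homeo_def)
  moreover have "c < a" "a < d" using a(1) by simp_all
  ultimately show "f0 c = c" "f0 d = d"
    using endpoints_fixed_of_fixfree_images[of f0 a c d g, OF _ a(2) _ _
        g_fixes_images_of_fix_frontier(1)[OF ends(1)] g_fixes_images_of_fix_frontier(1)[OF ends(2)]
        g_fixes_images_of_fix_frontier(2)[OF ends(1)] g_fixes_images_of_fix_frontier(2)[OF ends(2)]
        g_fixfree_on_conjugate_orbitals[OF orb a]]
    by blast+
qed

text \<open>\<open>h\<^sub>1\<close> and \<open>h\<^sub>2 = f\<^sub>0 h\<^sub>1 f\<^sub>0\<^sup>-\<^sup>1\<close> have the same germ at \<open>c\<close>, because right germs of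
  PL maps fixing \<open>c\<close> commute; both commute with \<open>g\<close>, whose orbital is \<open>(c, d)\<close>.\<close>
lemma h1_eq_h2_on_orbital:
  assumes orb: "is_orbital f1 c d" and a: "a \<in> {c<..<d}" "f0 a = a" "f1 a \<noteq> a"
  shows "\<forall>x\<in>{c<..<d}. h1 x = h2 x"
proof -
  have c: "f0 c = c" and d: "f0 d = d"
    using f0_fixes_orbital_ends[OF assms] by simp_all
  then have inv_c: "inv f0 c = c" by (metis f0_inv(2))
  have g_orb: "is_orbital g c d"
    using g_fixfree_on_conjugate_orbitals(1)[OF assms] orb c d
      g_fixes_images_of_fix_frontier(1)[OF orbital_ends_fix_frontier(1)[OF orb]]
      g_fixes_images_of_fix_frontier(1)[OF orbital_ends_fix_frontier(2)[OF orb]]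
    by (simp add: is_orbital_def)
  have "h1 c = c"
    using orb c inv_c by (simp add: h1_def is_orbital_def)
  then obtain e where e: "e > 0" "\<And>z. z \<in> {c..c+e} \<Longrightarrow> f0 (h1 z) = h1 (f0 z)"
    using right_affine_germs_commute[OF right_affine_homeos(1,5) c(1)] by blast
  obtain e' where e': "e' > 0" "\<And>y. y \<in> {c..c+e'} \<Longrightarrow> inv f0 y \<in> {c..c+e}"
    using incr_homeo_right_nhd[OF incr_homeos(3) e(1), of c] inv_c by metis
  have germ: "\<forall>y\<in>{c<..<c+e'}. h1 y = h2 y"
  proof
    fix y assume y: "y \<in> {c<..<c+e'}"
    have "h2 y = f0 (h1 (inv f0 y))" by (simp add: h1_def h2_def)
    also have "\<dots> = h1 y" using e(2)[OF e'(2)] y by simp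
    finally show "h1 y = h2 y" by simp
  qed
  have "\<forall>y\<in>{c<..<d}. h1 (g y) = g (h1 y)" "\<forall>y\<in>{c<..<d}. h2 (g y) = g (h2 y)"
    by (simp_all add: g_h1_commute g_h2_commute)
  then show ?thesis
    using commuting_agree_on_orbital[OF incr_homeos(4) g_orb _ _ e'(1) germ] by blast
qed

lemma f0_f1_commute_on_orbital:
  assumes orb: "is_orbital f1 c d" and a: "a \<in> {c<..<d}" "f0 a = a" "f1 a \<noteq> a"
  shows "\<forall>x\<in>{c<..<d}. f0 (f1 x) = f1 (f0 x)"
proof
  fix x assume x: "x \<in> {c<..<d}"
  have "f0 (f0 x) \<in> {c<..<d}"
    using f0_fixes_orbital_ends[OF assms] x incr_homeo_less_iff[OF incr_homeos(1)]
    by (metis greaterThanLessThan_iff)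
  then have "h1 (f0 (f0 x)) = h2 (f0 (f0 x))"
    using h1_eq_h2_on_orbital[OF assms] by blast
  then show "f0 (f1 x) = f1 (f0 x)"
    using incr_homeo_eq_iff[OF incr_homeos(1)] by (simp add: h1_def h2_def)
qed

lemma identity_near_moved_fixed_point:
  assumes a: "f0 a = a" "f1 a \<noteq> a"
  obtains c d where "c < a" "a < d" "\<forall>x\<in>{c<..<d}. f0 x = x"
proof -
  have "a \<in> {0<..<1}" "f1 0 = 0" "f1 1 = 1"
    using a(2) pl0_fixes_outside[OF pl0_f1] by (metis, simp_all)
  then obtain c d where cd: "c < a" "a < d" and orb: "is_orbital f1 c d"
    using orbital_around[OF incr_homeos(2), of 0 a 1] a(2) by auto
  then have a_orb: "a \<in> {c<..<d}" by simp
  have "\<forall>x\<in>{c<..<d}. f0 x = x"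
    by (rule commuting_fixes_orbital[OF incr_homeos(2) orb f0_f1_commute_on_orbital[OF orb a_orb a]
          a_orb a(1) right_affine_f0_g(1)])
  then show ?thesis using that cd by blast
qed

end

theorem lemma2p4:
  fixes f0 f1 :: "real \<Rightarrow> real" and A :: "real set"
  assumes "pl0 f0" and "pl0 f1"
    and "pl_comm (pl_conj f1 f0) (pl_mult f0 (pl_inv f1)) = id"
    and "pl_comm (pl_mult f0 (pl_inv f1)) (pl_conj f1 (pl_mult f0 f0)) = id"
    and "A \<in> orbitals f0"
  shows "(\<exists>B \<in> orbitals f1. B \<subseteq> A) \<or> A \<inter> pl_supp f1 = {}"
proof -
  have f0: "incr_homeo f0" and f1: "incr_homeo f1"
    using pl0_incr_homeo assms(1,2) by blast+
  define g where "g = (\<lambda>x. inv f1 (f0 x))"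
  define h1 where "h1 = (\<lambda>x. f0 (f1 (inv f0 x)))"
  define h2 where "h2 = (\<lambda>x. f0 (f0 (f1 (inv f0 (inv f0 x)))))"
  have eqs: "pl_mult f0 (pl_inv f1) = g" "pl_conj f1 f0 = h1" "pl_conj f1 (pl_mult f0 f0) = h2"
    using incr_homeo_inv_comp[OF f0 f0]
    by (simp_all add: g_def h1_def h2_def pl_conj_def pl_mult_def pl_inv_def comp_def)
  have i0: "incr_homeo (inv f0)" and i1: "incr_homeo (inv f1)"
    using f0 f1 by (simp_all add: incr_homeo_inv)
  have "incr_homeo g" "incr_homeo h1" "incr_homeo h2"
    unfolding g_def h1_def h2_def
    by (rule incr_homeo_comp[OF i1 f0], rule incr_homeo_comp[OF f0 incr_homeo_comp[OF f1 i0]],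
        rule incr_homeo_comp[OF f0 incr_homeo_comp[OF f0 incr_homeo_comp[OF f1
          incr_homeo_comp[OF i0 i0]]]])
  then have "g (h1 x) = h1 (g x)" "g (h2 x) = h2 (g x)" for x
    using pl_comm_eq_id_imp_commute[of h1 g x] pl_comm_eq_id_imp_commute[of g h2 x] assms(3,4)
    by (simp_all add: eqs)
  then interpret pl0_pair f0 f1 g h1 h2
    using assms(1,2) g_def h1_def h2_def by unfold_locales simp_all
  have f1_fixes_frontier: "f1 x = x" if x: "x \<in> frontier (pl_supp f0)" for x
  proof (rule ccontr)
    assume moved: "f1 x \<noteq> x"
    have "x \<notin> pl_supp f0"
      using x open_pl_supp[OF f0] frontier_disjoint_eq by blast
    then obtain c d where "c < x" "x < d" "\<forall>y\<in>{c<..<d}. f0 y = y"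
      using identity_near_moved_fixed_point moved by (auto simp: pl_supp_def)
    then have "x \<in> {c<..<d}" "{c<..<d} \<inter> closure (pl_supp f0) = {}"
      using open_Int_closure_eq_empty[of "{c<..<d}"] by (auto simp: pl_supp_def)
    then show False using x by (auto simp: frontier_def)
  qed
  show ?thesis
  proof (cases "A \<inter> pl_supp f1 = {}")
    case False
    then obtain x where x: "x \<in> A" "x \<in> pl_supp f1" by blast
    define B where "B = connected_component_set (pl_supp f1) x"
    have "B \<inter> frontier A = {}"
      using frontier_of_components_subset[of A "pl_supp f0"] assms(5) f1_fixes_frontier
        connected_component_subset[of "pl_supp f1" x]
      by (force simp: B_def orbitals_def pl_supp_def)
    moreover have "x \<in> B \<inter> A"
      using x connected_component_refl[OF x(2)] by (simp add: B_def)
    moreover have "connected B" by (simp add: B_def)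
    ultimately have "B \<subseteq> A"
      using connected_Int_frontier[of B A] by blast
    moreover have "B \<in> orbitals f1"
      unfolding B_def orbitals_def using componentsI[OF x(2)] .
    ultimately show ?thesis by blast
  qed simp
qed

end
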